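(* Let $0<\lambda_1\le\lambda_2\le1$ and let $K_1,K_2:\mathbb{R}_+\to\mathbb{R}$ be two functions. Define \[ I:=\sup_{\varphi_1,\varphi_2}\int_0^\infty\big(\varphi_1(t)K_1(t)+\varphi_2(t)K_2(t)\big)\,\mathrm{d}t, \] the supremum over all functions $\varphi_i:\mathbb{R}_+\to[0,\lambda_i]$ ($i=1,2$) such that $\varphi_1+\varphi_2$ is nondecreasing, and for $0\le a\le b\le c\le\infty$ define \[ I(a,b,c):=\lambda_1\int_a^c\max\{K_1(t),K_2(t)\}\,\mathrm{d}t+\lambda_1\int_c^\infty(K_1(t)+K_2(t))\,\mathrm{d}t+(\lambda_2-\lambda_1)\int_b^\infty K_2(t)\,\mathrm{d}t . \] Then $I=\sup_{0\le a\le b\le c\le\infty}I(a,b,c)$.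
   Context: All functions are Borel measurable. *)

theory Defs
  imports "HOL-Analysis.Analysis"
begin

definition admissible_pair :: "real \<Rightarrow> real \<Rightarrow> (real \<Rightarrow> real) \<Rightarrow> (real \<Rightarrow> real) \<Rightarrow> bool" where
  "admissible_pair l1 l2 \<phi>1 \<phi>2 \<longleftrightarrow>
     \<phi>1 \<in> borel_measurable borel \<and> \<phi>2 \<in> borel_measurable borel \<and>
     (\<forall>t\<ge>0. 0 \<le> \<phi>1 t \<and> \<phi>1 t \<le> l1) \<and>
     (\<forall>t\<ge>0. 0 \<le> \<phi>2 t \<and> \<phi>2 t \<le> l2) \<and>
     mono_on {0..} (\<lambda>t. \<phi>1 t + \<phi>2 t)"

definition I_sup :: "real \<Rightarrow> real \<Rightarrow> (real \<Rightarrow> real) \<Rightarrow> (real \<Rightarrow> real) \<Rightarrow> real" where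
  "I_sup l1 l2 K1 K2 = Sup {(LINT t:{0..}|lborel. \<phi>1 t * K1 t + \<phi>2 t * K2 t) | \<phi>1 \<phi>2.
      admissible_pair l1 l2 \<phi>1 \<phi>2}"

definition I_abc :: "real \<Rightarrow> real \<Rightarrow> (real \<Rightarrow> real) \<Rightarrow> (real \<Rightarrow> real) \<Rightarrow> real \<Rightarrow> real \<Rightarrow> ereal \<Rightarrow> real" where
  "I_abc l1 l2 K1 K2 a b c =
     l1 * (LINT t:{t. a \<le> t \<and> ereal t < c}|lborel. max (K1 t) (K2 t))
   + l1 * (LINT t:{t. c \<le> ereal t}|lborel. K1 t + K2 t)
   + (l2 - l1) * (LINT t:{b..}|lborel. K2 t)"

end

theory Submission
  imports Defs
begin

text \<open>
  Put \<open>s = \<phi>1 + \<phi>2\<close>. Pointwise, \<open>\<phi>1 K1 + \<phi>2 K2\<close> is at most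
  \<open>max K1 K2 \<cdot> L0 + K2 \<cdot> L1 + min K1 K2 \<cdot> L2\<close>, where \<open>L0, L1, L2\<close> are the portions of \<open>s\<close>
  lying in the layers \<open>[0,\<lambda>1], [\<lambda>1,\<lambda>2], [\<lambda>2,\<lambda>1+\<lambda>2]\<close>: the larger kernel is served first.
  Each portion is an average over \<open>v \<in> [0,1]\<close> of the indicator of a superlevel set
  \<open>{s > level(v)}\<close>, with the three levels increasing, and since \<open>s\<close> is nondecreasing these
  superlevel sets are half-lines \<open>[a,\<infinity>) \<supseteq> [b,\<infinity>) \<supseteq> [c,\<infinity>)\<close>. By Fubini the integral is
  therefore an average of the quantities
  \<open>\<lambda>1 \<integral>\<^sub>a\<^sup>\<infinity> max K1 K2 + (\<lambda>2-\<lambda>1) \<integral>\<^sub>b\<^sup>\<infinity> K2 + \<lambda>1 \<integral>\<^sub>c\<^sup>\<infinity> min K1 K2 = I(a,b,c)\<close>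
  (the case \<open>b = \<infinity>\<close> being a limit of \<open>b = n\<close>).
  Conversely, \<open>I(a,b,c)\<close> is attained by step functions whose sum jumps at \<open>a\<close>, \<open>b\<close> and \<open>c\<close>.
\<close>

section \<open>Tail integrals\<close>

definition tail_integral :: "(real \<Rightarrow> real) \<Rightarrow> ereal \<Rightarrow> real" where
  "tail_integral f a = (LINT t:{t. a \<le> ereal t}|lborel. f t)"

lemma tail_integral_eq_integral_indicator:
  "tail_integral f a = (\<integral>t. indicator {t. a \<le> ereal t} t * f t \<partial>lborel)"
  by (simp add: tail_integral_def set_lebesgue_integral_def)

lemma tail_integral_PInf [simp]: "tail_integral f \<infinity> = 0"
  by (simp add: tail_integral_def set_lebesgue_integral_def)

lemma tendsto_tail_integral_at_top:
  fixes f :: "real \<Rightarrow> real"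
  assumes f: "integrable lborel f"
  shows "(\<lambda>n. tail_integral f (ereal (real n))) \<longlonglongrightarrow> 0"
proof -
  have [measurable]: "f \<in> borel_measurable borel"
    using borel_measurable_integrable[OF f] by simp
  have "(\<lambda>n. \<integral>t. indicator {real n..} t * f t \<partial>lborel) \<longlonglongrightarrow> (\<integral>t. 0 \<partial>(lborel :: real measure))"
  proof (rule Bochner_Integration.integral_dominated_convergence[where w="\<lambda>t. \<bar>f t\<bar>"])
    show "AE t in lborel. (\<lambda>n. indicator {real n..} t * f t) \<longlonglongrightarrow> 0"
    proof (rule AE_I2, rule tendsto_eventually)
      fix t :: real
      show "\<forall>\<^sub>F n in sequentially. indicator {real n..} t * f t = 0"
        using eventually_gt_at_top[of "nat \<lceil>t\<rceil>"]
      proof eventually_elim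
        case (elim n)
        then have "t < real n" by linarith
        then show ?case by (simp add: indicator_def)
      qed
    qed
  qed (use f in \<open>auto simp: indicator_def\<close>)
  then show ?thesis
    by (simp add: tail_integral_eq_integral_indicator atLeast_def)
qed

lemma tendsto_tail_integral_min:
  fixes f :: "real \<Rightarrow> real"
  assumes "integrable lborel f"
  shows "(\<lambda>n. tail_integral f (min a (ereal (real n)))) \<longlonglongrightarrow> tail_integral f a"
proof (cases a)
  case (real r)
  have "\<forall>\<^sub>F n in sequentially. tail_integral f (min a (ereal (real n))) = tail_integral f a"
    using eventually_ge_at_top[of "nat \<lceil>r\<rceil>"]
  proof eventually_elim
    case (elim n)
    then have "r \<le> real n" by linarith
    then show ?case by (simp add: real)
  qed
  then show ?thesis
    by (rule tendsto_eventually)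
next
  case PInf
  then show ?thesis using tendsto_tail_integral_at_top[OF assms] by simp
qed simp

section \<open>Superlevel sets of monotone functions\<close>

definition superlevel :: "(real \<Rightarrow> real) \<Rightarrow> real \<Rightarrow> real set" where
  "superlevel s x = {t. 0 \<le> t \<and> x < s t}"

definition crossing_time :: "(real \<Rightarrow> real) \<Rightarrow> real \<Rightarrow> ereal" where
  "crossing_time s x = (if superlevel s x = {} then \<infinity> else ereal (Inf (superlevel s x)))"

lemma sets_superlevel [measurable]:
  "s \<in> borel_measurable borel \<Longrightarrow> superlevel s x \<in> sets borel"
  unfolding superlevel_def by measurable

lemma bdd_below_superlevel: "bdd_below (superlevel s x)"
  by (auto simp: superlevel_def bdd_below_def)

lemma crossing_time_nonneg: "0 \<le> crossing_time s x"
  by (auto simp: crossing_time_def superlevel_def intro!: cInf_greatest)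

lemma crossing_time_mono:
  assumes "x \<le> y"
  shows "crossing_time s x \<le> crossing_time s y"
proof -
  have sub: "superlevel s y \<subseteq> superlevel s x"
    using assms by (auto simp: superlevel_def)
  then have "Inf (superlevel s x) \<le> Inf (superlevel s y)" if "superlevel s y \<noteq> {}"
    using that by (intro cInf_superset_mono bdd_below_superlevel)
  then show ?thesis
    using sub by (auto simp: crossing_time_def)
qed

lemma AE_indicator_superlevel:
  assumes "mono_on {0..} s"
  shows "AE t in lborel. indicator (superlevel s x) t = (indicator {t. crossing_time s x \<le> ereal t} t :: real)"
proof (cases "superlevel s x = {}")
  case True
  then show ?thesis by (simp add: crossing_time_def)
next
  case False
  define i where "i = Inf (superlevel s x)"
  have mem_iff: "t \<in> superlevel s x \<longleftrightarrow> i \<le> t" if "t \<noteq> i" for t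
  proof
    assume "t \<in> superlevel s x"
    then show "i \<le> t"
      unfolding i_def by (rule cInf_lower[OF _ bdd_below_superlevel])
  next
    assume "i \<le> t"
    with that have "Inf (superlevel s x) < t" by (simp add: i_def)
    then obtain u where u: "u \<in> superlevel s x" "u < t"
      using False by (metis cInf_less_iff bdd_below_superlevel)
    then have "s u \<le> s t"
      by (intro mono_onD[OF assms]) (auto simp: superlevel_def)
    with u show "t \<in> superlevel s x" by (auto simp: superlevel_def)
  qed
  show ?thesis
    using AE_lborel_singleton[of i]
    by eventually_elim (use mem_iff False in \<open>auto simp: crossing_time_def i_def[symmetric] indicator_def\<close>)
qed

lemma integral_superlevel_eq_tail_integral:
  fixes f :: "real \<Rightarrow> real"
  assumes "mono_on {0..} s" "s \<in> borel_measurable borel" "integrable lborel f"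
  shows "(\<integral>t. indicator (superlevel s x) t * f t \<partial>lborel) = tail_integral f (crossing_time s x)"
  unfolding tail_integral_eq_integral_indicator
proof (rule integral_cong_AE)
  have [measurable]: "s \<in> borel_measurable borel" "f \<in> borel_measurable borel"
    using assms borel_measurable_integrable[OF assms(3)] by auto
  show "(\<lambda>t. indicator (superlevel s x) t * f t) \<in> borel_measurable lborel"
    "(\<lambda>t. indicator {t. crossing_time s x \<le> ereal t} t * f t) \<in> borel_measurable lborel"
    by measurable
  show "AE t in lborel. indicator (superlevel s x) t * f t = indicator {t. crossing_time s x \<le> ereal t} t * f t"
    using AE_indicator_superlevel[OF assms(1), of x] by eventually_elim simp
qed

section \<open>Layers\<close>

definition layer :: "real \<Rightarrow> real \<Rightarrow> real \<Rightarrow> real" where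
  "layer \<beta> \<alpha> x = min \<alpha> (max 0 (x - \<beta>))"

lemma weighted_sum_le_layers:
  fixes p1 p2 l1 l2 k1 k2 :: real
  assumes "0 \<le> p1" "p1 \<le> l1" "0 \<le> p2" "p2 \<le> l2" "l1 \<le> l2"
  shows "p1 * k1 + p2 * k2 \<le> max k1 k2 * layer 0 l1 (p1 + p2) + k2 * layer l1 (l2 - l1) (p1 + p2)
    + min k1 k2 * layer l2 l1 (p1 + p2)" (is "_ \<le> ?R")
proof -
  have saturated: "p1 = l1 \<and> p2 = l2" if "l1 + l2 \<le> p1 + p2"
    using assms that by linarith
  consider "k1 \<le> k2" | "k2 < k1" by linarith
  then show ?thesis
  proof cases
    case 1
    then have "?R = k1 * (p1 + p2) + (k2 - k1) * min l2 (p1 + p2)"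
      using assms by (cases "l1 + l2 \<le> p1 + p2")
        (auto dest: saturated simp: layer_def max_def min_def algebra_simps)
    moreover have "(k2 - k1) * p2 \<le> (k2 - k1) * min l2 (p1 + p2)"
      using 1 assms by (intro mult_left_mono) auto
    ultimately show ?thesis by (simp add: algebra_simps)
  next
    case 2
    then have "?R = k2 * (p1 + p2) + (k1 - k2) * min l1 (p1 + p2)"
      using assms by (cases "l1 + l2 \<le> p1 + p2")
        (auto dest: saturated simp: layer_def max_def min_def algebra_simps)
    moreover have "(k1 - k2) * p1 \<le> (k1 - k2) * min l1 (p1 + p2)"
      using 2 assms by (intro mult_left_mono) auto
    ultimately show ?thesis by (simp add: algebra_simps)
  qed
qed

lemma layer_eq_measure:
  fixes \<alpha> \<beta> x :: real
  assumes "0 \<le> \<alpha>"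
  shows "layer \<beta> \<alpha> x = \<alpha> * measure lborel ({0..1} \<inter> {v. \<beta> + \<alpha> * v < x})"
proof (cases "\<alpha> = 0")
  case True
  then show ?thesis by (simp add: layer_def)
next
  case False
  with assms have "0 < \<alpha>" by simp
  define y where "y = (x - \<beta>) / \<alpha>"
  have "{0..1} \<inter> {v. \<beta> + \<alpha> * v < x} = {0..1} \<inter> {..<y}"
    using \<open>0 < \<alpha>\<close> by (auto simp: y_def field_simps)
  also have "measure lborel \<dots> = min 1 (max 0 y)"
  proof -
    consider "y \<le> 0" | "0 < y" "y \<le> 1" | "1 < y" by linarith
    then show ?thesis
    proof cases
      case 1
      then have "{0..1::real} \<inter> {..<y} = {}" by auto
      with 1 show ?thesis by simp
    next
      case 2
      then have "{0..1::real} \<inter> {..<y} = {0..<y}" by auto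
      with 2 show ?thesis by simp
    next
      case 3
      then have "{0..1::real} \<inter> {..<y} = {0..1}" by auto
      with 3 show ?thesis by simp
    qed
  qed
  finally show ?thesis
    using \<open>0 < \<alpha>\<close> by (simp add: layer_def y_def min_def max_def field_simps)
qed

section \<open>Admissible pairs and the quantities \<open>I(a,b,c)\<close>\<close>

definition I_tail :: "real \<Rightarrow> real \<Rightarrow> (real \<Rightarrow> real) \<Rightarrow> (real \<Rightarrow> real) \<Rightarrow> ereal \<Rightarrow> ereal \<Rightarrow> ereal \<Rightarrow> real" where
  "I_tail l1 l2 K1 K2 a b c =
     l1 * tail_integral (\<lambda>t. max (K1 t) (K2 t)) a + (l2 - l1) * tail_integral K2 b
   + l1 * tail_integral (\<lambda>t. min (K1 t) (K2 t)) c"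

definition I_abc_values :: "real \<Rightarrow> real \<Rightarrow> (real \<Rightarrow> real) \<Rightarrow> (real \<Rightarrow> real) \<Rightarrow> real set" where
  "I_abc_values l1 l2 K1 K2 = {I_abc l1 l2 K1 K2 a b c | a b c. 0 \<le> a \<and> a \<le> b \<and> ereal b \<le> c}"

lemma admissible_pair_measurable:
  "admissible_pair l1 l2 p1 p2 \<Longrightarrow> p1 \<in> borel_measurable borel"
  "admissible_pair l1 l2 p1 p2 \<Longrightarrow> p2 \<in> borel_measurable borel"
  by (simp_all add: admissible_pair_def)

lemma admissible_pair_bounds:
  assumes "admissible_pair l1 l2 p1 p2" "0 \<le> t"
  shows "0 \<le> p1 t" "p1 t \<le> l1" "0 \<le> p2 t" "p2 t \<le> l2"
  using assms by (simp_all add: admissible_pair_def)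

lemma abs_mult_le_abs_right:
  fixes c k :: real
  assumes "0 \<le> c" "c \<le> 1"
  shows "\<bar>c * k\<bar> \<le> \<bar>k\<bar>"
  using assms by (simp add: abs_mult mult_left_le_one_le)

lemma integrable_indicator_mult:
  fixes f :: "real \<Rightarrow> real"
  shows "A \<in> sets borel \<Longrightarrow> integrable lborel f \<Longrightarrow> integrable lborel (\<lambda>t. indicator A t * f t)"
  using integrable_real_mult_indicator[of A lborel f] by (simp add: mult.commute)

context
  fixes l1 l2 :: real and K1 K2 :: "real \<Rightarrow> real"
  assumes l: "0 < l1" "l1 \<le> l2" "l2 \<le> 1"
    and int1: "integrable lborel K1" and int2: "integrable lborel K2"
begin

lemma borel_measurable_K [measurable]:
  "K1 \<in> borel_measurable borel" "K2 \<in> borel_measurable borel"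
  using borel_measurable_integrable[OF int1] borel_measurable_integrable[OF int2] by simp_all

lemma I_abc_eq_I_tail:
  assumes "0 \<le> a" "a \<le> b" "ereal b \<le> c"
  shows "I_abc l1 l2 K1 K2 a b c = I_tail l1 l2 K1 K2 (ereal a) (ereal b) c"
proof -
  have "ereal a \<le> c" using assms by (meson ereal_less_eq(3) order.trans)
  then have split: "indicator {t. a \<le> t \<and> ereal t < c} t * max (K1 t) (K2 t)
      + indicator {t. c \<le> ereal t} t * (K1 t + K2 t)
    = indicator {t. ereal a \<le> ereal t} t * max (K1 t) (K2 t)
      + indicator {t. c \<le> ereal t} t * min (K1 t) (K2 t)" for t
    using order_trans[of "ereal a" c "ereal t"]
    by (cases "c \<le> ereal t"; cases "a \<le> t") (auto simp: indicator_def max_def min_def not_le)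
  have "(LINT t:{t. a \<le> t \<and> ereal t < c}|lborel. max (K1 t) (K2 t))
      + (LINT t:{t. c \<le> ereal t}|lborel. K1 t + K2 t)
    = (\<integral>t. indicator {t. a \<le> t \<and> ereal t < c} t * max (K1 t) (K2 t)
      + indicator {t. c \<le> ereal t} t * (K1 t + K2 t) \<partial>lborel)"
    unfolding set_lebesgue_integral_def real_scaleR_def
    by (intro Bochner_Integration.integral_add[symmetric] integrable_indicator_mult)
      (auto simp: int1 int2)
  also have "\<dots> = tail_integral (\<lambda>t. max (K1 t) (K2 t)) a + tail_integral (\<lambda>t. min (K1 t) (K2 t)) c"
    unfolding split tail_integral_eq_integral_indicator
    by (intro Bochner_Integration.integral_add integrable_indicator_mult) (auto simp: int1 int2)
  finally have head: "l1 * (LINT t:{t. a \<le> t \<and> ereal t < c}|lborel. max (K1 t) (K2 t))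
      + l1 * (LINT t:{t. c \<le> ereal t}|lborel. K1 t + K2 t)
    = l1 * tail_integral (\<lambda>t. max (K1 t) (K2 t)) a + l1 * tail_integral (\<lambda>t. min (K1 t) (K2 t)) c"
    by (simp add: distrib_left[symmetric])
  have tail_b: "(LINT t:{b..}|lborel. K2 t) = tail_integral K2 (ereal b)"
    by (simp add: tail_integral_def atLeast_def)
  show ?thesis
    unfolding I_abc_def I_tail_def head tail_b by (simp only: ac_simps)
qed

lemma admissible_integrand_abs_le:
  assumes "admissible_pair l1 l2 p1 p2"
  shows "\<bar>indicator {0..} t * (p1 t * K1 t + p2 t * K2 t)\<bar> \<le> \<bar>K1 t\<bar> + \<bar>K2 t\<bar>"
proof (cases "0 \<le> t")
  case True
  note p = admissible_pair_bounds[OF assms True]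
  have "\<bar>p1 t * K1 t\<bar> \<le> \<bar>K1 t\<bar>" "\<bar>p2 t * K2 t\<bar> \<le> \<bar>K2 t\<bar>"
    using p l by (intro abs_mult_le_abs_right; linarith)+
  then show ?thesis using True by simp
qed simp

lemma admissible_integrable:
  assumes "admissible_pair l1 l2 p1 p2"
  shows "integrable lborel (\<lambda>t. indicator {0..} t * (p1 t * K1 t + p2 t * K2 t))"
proof (rule Bochner_Integration.integrable_bound)
  show "integrable lborel (\<lambda>t. \<bar>K1 t\<bar> + \<bar>K2 t\<bar>)" using int1 int2 by auto
  have [measurable]: "p1 \<in> borel_measurable borel" "p2 \<in> borel_measurable borel"
    using admissible_pair_measurable[OF assms] .
  show "(\<lambda>t. indicator {0..} t * (p1 t * K1 t + p2 t * K2 t)) \<in> borel_measurable lborel"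
    by measurable
  show "AE t in lborel. norm (indicator {0..} t * (p1 t * K1 t + p2 t * K2 t)) \<le> norm (\<bar>K1 t\<bar> + \<bar>K2 t\<bar>)"
    using admissible_integrand_abs_le[OF assms] by auto
qed

lemma admissible_integral_le:
  assumes "admissible_pair l1 l2 p1 p2"
  shows "(LINT t:{0..}|lborel. p1 t * K1 t + p2 t * K2 t) \<le> (\<integral>t. \<bar>K1 t\<bar> + \<bar>K2 t\<bar> \<partial>lborel)"
  unfolding set_lebesgue_integral_def real_scaleR_def
  using admissible_integrand_abs_le[OF assms] int1 int2
  by (intro Bochner_Integration.integral_mono[OF admissible_integrable[OF assms]]) (auto simp: abs_le_iff)

lemma bdd_above_admissible_integrals:
  "bdd_above {(LINT t:{0..}|lborel. p1 t * K1 t + p2 t * K2 t) | p1 p2. admissible_pair l1 l2 p1 p2}"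
  unfolding bdd_above_def using admissible_integral_le by blast

text \<open>The extremal pair: the sum \<open>p1 + p2\<close> is \<open>0, l1, l2, l1 + l2\<close> on \<open>[0,a), [a,b), [b,c), [c,\<infinity>)\<close>,
  and on \<open>[a,c)\<close> the mass \<open>l1\<close> goes to the larger kernel.\<close>

lemma I_tail_attained:
  assumes "0 \<le> a" "a \<le> b" "ereal b \<le> c"
  obtains p1 p2 where "admissible_pair l1 l2 p1 p2"
    "(LINT t:{0..}|lborel. p1 t * K1 t + p2 t * K2 t) = I_tail l1 l2 K1 K2 (ereal a) (ereal b) c"
proof -
  define p1 where "p1 t = (if c \<le> ereal t \<or> a \<le> t \<and> K2 t \<le> K1 t then l1 else 0)" for t
  define p2 where "p2 t = (if c \<le> ereal t then l2
      else (if a \<le> t \<and> K1 t < K2 t then l1 else 0) + (if b \<le> t then l2 - l1 else 0))" for t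
  have after_c: "b \<le> t" if "c \<le> ereal t" for t
    using order_trans[OF assms(3) that] by simp
  have sum_eq: "p1 t + p2 t = (if c \<le> ereal t then l1 + l2
      else (if a \<le> t then l1 else 0) + (if b \<le> t then l2 - l1 else 0))" for t
    using after_c[of t] assms by (auto simp: p1_def p2_def)
  have "admissible_pair l1 l2 p1 p2"
    unfolding admissible_pair_def
  proof (intro conjI allI impI)
    show "p1 \<in> borel_measurable borel" "p2 \<in> borel_measurable borel"
      unfolding p1_def p2_def by measurable
    show "mono_on {0..} (\<lambda>t. p1 t + p2 t)"
    proof (rule mono_onI)
      fix r t :: real
      assume "r \<le> t"
      moreover have "c \<le> ereal t" if "c \<le> ereal r"
        using that \<open>r \<le> t\<close> by (meson ereal_less_eq(3) order_trans)
      ultimately show "p1 r + p2 r \<le> p1 t + p2 t"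
        unfolding sum_eq using l assms after_c[of r] after_c[of t] by auto
    qed
  qed (use l in \<open>auto simp: p1_def p2_def\<close>)
  moreover have "indicator {0..} t * (p1 t * K1 t + p2 t * K2 t) =
      l1 * (indicator {t. ereal a \<le> ereal t} t * max (K1 t) (K2 t))
    + (l2 - l1) * (indicator {t. ereal b \<le> ereal t} t * K2 t)
    + l1 * (indicator {t. c \<le> ereal t} t * min (K1 t) (K2 t))" for t
    using after_c[of t] assms
    by (cases "c \<le> ereal t"; cases "a \<le> t"; cases "b \<le> t")
      (auto simp: p1_def p2_def indicator_def max_def min_def algebra_simps)
  then have "(LINT t:{0..}|lborel. p1 t * K1 t + p2 t * K2 t) = I_tail l1 l2 K1 K2 (ereal a) (ereal b) c"
    unfolding set_lebesgue_integral_def real_scaleR_def I_tail_def tail_integral_eq_integral_indicator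
    by (simp add: integrable_indicator_mult int1 int2)
  ultimately show ?thesis by (rule that)
qed

lemma bdd_above_I_abc_values: "bdd_above (I_abc_values l1 l2 K1 K2)"
proof -
  have "x \<le> (\<integral>t. \<bar>K1 t\<bar> + \<bar>K2 t\<bar> \<partial>lborel)" if x_mem: "x \<in> I_abc_values l1 l2 K1 K2" for x
  proof -
    obtain a b c where x: "x = I_abc l1 l2 K1 K2 a b c" "0 \<le> a" "a \<le> b" "ereal b \<le> c"
      using x_mem unfolding I_abc_values_def by blast
    obtain p1 p2 where "admissible_pair l1 l2 p1 p2"
      "(LINT t:{0..}|lborel. p1 t * K1 t + p2 t * K2 t) = I_tail l1 l2 K1 K2 (ereal a) (ereal b) c"
      using I_tail_attained[OF x(2-4)] .
    then show ?thesis
      using admissible_integral_le I_abc_eq_I_tail[OF x(2-4)] x(1) by metis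
  qed
  then show ?thesis unfolding bdd_above_def by blast
qed

lemma I_tail_le_Sup_I_abc_values:
  assumes "0 \<le> a" "a \<le> b" "b \<le> c"
  shows "I_tail l1 l2 K1 K2 a b c \<le> Sup (I_abc_values l1 l2 K1 K2)"
proof -
  have real_le: "I_tail l1 l2 K1 K2 (ereal x) (ereal y) z \<le> Sup (I_abc_values l1 l2 K1 K2)"
    if "0 \<le> x" "x \<le> y" "ereal y \<le> z" for x y z
    using cSup_upper[OF _ bdd_above_I_abc_values] I_abc_eq_I_tail[OF that] that
    by (force simp: I_abc_values_def)
  show ?thesis
  proof (cases b)
    case (real y)
    moreover obtain x where "a = ereal x" using assms real by (cases a) auto
    ultimately show ?thesis using real_le[of x y c] assms by simp
  next
    case PInf
    with assms have c: "c = \<infinity>" by simp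
    text \<open>\<open>b = \<infinity>\<close> is not of the form \<open>I(a,b,c)\<close>; approximate it by \<open>b = n\<close>.\<close>
    define x where "x n = real_of_ereal (min a (ereal (real n)))" for n :: nat
    have x: "ereal (x n) = min a (ereal (real n))" for n
      using assms(1) by (cases a) (auto simp: x_def min_def)
    have "(\<lambda>n. l1 * tail_integral (\<lambda>t. max (K1 t) (K2 t)) (min a (ereal (real n)))
        + (l2 - l1) * tail_integral K2 (ereal (real n)) + l1 * tail_integral (\<lambda>t. min (K1 t) (K2 t)) \<infinity>)
      \<longlonglongrightarrow> l1 * tail_integral (\<lambda>t. max (K1 t) (K2 t)) a + (l2 - l1) * 0 + l1 * 0"
      by (intro tendsto_intros tendsto_tail_integral_min tendsto_tail_integral_at_top
          integrable_max int1 int2) simp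
    then have "(\<lambda>n. I_tail l1 l2 K1 K2 (ereal (x n)) (ereal (real n)) \<infinity>) \<longlonglongrightarrow> I_tail l1 l2 K1 K2 a b c"
      by (simp add: I_tail_def x PInf c)
    moreover have "I_tail l1 l2 K1 K2 (ereal (x n)) (ereal (real n)) \<infinity> \<le> Sup (I_abc_values l1 l2 K1 K2)" for n
      using x[of n] assms(1) by (intro real_le) (auto simp: min_def split: if_splits)
    ultimately show ?thesis
      using LIMSEQ_le_const2 by blast
  qed (use assms in auto)
qed

text \<open>Integrating out \<open>v\<close> yields the layers of \<open>s\<close> (\<open>layer_eq_measure\<close>); integrating out \<open>t\<close>
  yields tail integrals from crossing times of \<open>s\<close> (\<open>integral_superlevel_eq_tail_integral\<close>).\<close>

definition layer_integrand :: "(real \<Rightarrow> real) \<Rightarrow> real \<Rightarrow> real \<Rightarrow> real" where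
  "layer_integrand s t v = indicator {0..1} v *
     (l1 * indicator (superlevel s (l1 * v)) t * max (K1 t) (K2 t)
    + (l2 - l1) * indicator (superlevel s (l1 + (l2 - l1) * v)) t * K2 t
    + l1 * indicator (superlevel s (l2 + l1 * v)) t * min (K1 t) (K2 t))"

lemma layer_integrand_abs_le:
  "\<bar>layer_integrand s t v\<bar> \<le>
     indicator {0..1} v * (\<bar>max (K1 t) (K2 t)\<bar> + \<bar>K2 t\<bar> + \<bar>min (K1 t) (K2 t)\<bar>)"
proof (cases "v \<in> {0..1}")
  case True
  have bound: "\<bar>c * indicator A t * k\<bar> \<le> \<bar>k\<bar>" if "0 \<le> c" "c \<le> 1" for c k :: real and A
    using that by (intro abs_mult_le_abs_right) (auto simp: indicator_def)
  have "\<bar>layer_integrand s t v\<bar> = \<bar>l1 * indicator (superlevel s (l1 * v)) t * max (K1 t) (K2 t)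
    + (l2 - l1) * indicator (superlevel s (l1 + (l2 - l1) * v)) t * K2 t
    + l1 * indicator (superlevel s (l2 + l1 * v)) t * min (K1 t) (K2 t)\<bar>"
    (is "_ = \<bar>?x + ?y + ?z\<bar>")
    using True by (simp add: layer_integrand_def)
  also have "\<dots> \<le> \<bar>?x\<bar> + \<bar>?y\<bar> + \<bar>?z\<bar>"
    by (meson abs_triangle_ineq add_right_mono order_trans)
  also have "\<dots> \<le> \<bar>max (K1 t) (K2 t)\<bar> + \<bar>K2 t\<bar> + \<bar>min (K1 t) (K2 t)\<bar>"
    using l by (intro add_mono bound) auto
  finally show ?thesis using True by simp
qed (simp add: layer_integrand_def)

lemma integrable_layer_integrand:
  assumes [measurable]: "s \<in> borel_measurable borel"
  shows "integrable (lborel \<Otimes>\<^sub>M lborel) (\<lambda>(t, v). layer_integrand s t v)"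
proof (rule Bochner_Integration.integrable_bound)
  define h where "h t = \<bar>max (K1 t) (K2 t)\<bar> + \<bar>K2 t\<bar> + \<bar>min (K1 t) (K2 t)\<bar>" for t
  have [measurable]: "h \<in> borel_measurable borel" unfolding h_def by measurable
  show "integrable (lborel \<Otimes>\<^sub>M lborel) (\<lambda>(t, v). indicator {0..1::real} v * h t)"
  proof (rule lborel_pair.Fubini_integrable)
    show "integrable lborel (\<lambda>t. \<integral>v. norm (case (t, v) of (t, v) \<Rightarrow> indicator {0..1::real} v * h t) \<partial>lborel)"
      using int1 int2 by (simp add: h_def abs_mult)
  qed (simp_all add: h_def)
  show "(\<lambda>(t, v). layer_integrand s t v) \<in> borel_measurable (lborel \<Otimes>\<^sub>M lborel)"
    unfolding layer_integrand_def superlevel_def by measurable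
  show "AE x in lborel \<Otimes>\<^sub>M lborel. norm (case x of (t, v) \<Rightarrow> layer_integrand s t v)
      \<le> norm (case x of (t, v) \<Rightarrow> indicator {0..1::real} v * h t)"
    using layer_integrand_abs_le by (auto simp: h_def)
qed

lemma integral_layer_integrand_dv:
  assumes "0 \<le> t"
  shows "(\<integral>v. layer_integrand s t v \<partial>lborel) = max (K1 t) (K2 t) * layer 0 l1 (s t)
    + K2 t * layer l1 (l2 - l1) (s t) + min (K1 t) (K2 t) * layer l2 l1 (s t)"
proof -
  define A where "A \<beta> \<alpha> = {0..1} \<inter> {v::real. \<beta> + \<alpha> * v < s t}" for \<beta> \<alpha>
  have "integrable lborel (indicator (A \<beta> \<alpha>) :: real \<Rightarrow> real)" for \<beta> \<alpha>
  proof (rule integrable_real_indicator)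
    show "A \<beta> \<alpha> \<in> sets lborel" unfolding A_def by measurable
    have "emeasure lborel (A \<beta> \<alpha>) \<le> emeasure lborel {0..1::real}"
      unfolding A_def by (intro emeasure_mono) auto
    then show "emeasure lborel (A \<beta> \<alpha>) < \<infinity>" by (simp add: order_le_less_trans)
  qed
  moreover have "layer_integrand s t v = max (K1 t) (K2 t) * l1 * indicator (A 0 l1) v
      + K2 t * (l2 - l1) * indicator (A l1 (l2 - l1)) v + min (K1 t) (K2 t) * l1 * indicator (A l2 l1) v" for v
    using assms by (auto simp: layer_integrand_def A_def superlevel_def indicator_def)
  ultimately have "(\<integral>v. layer_integrand s t v \<partial>lborel) = max (K1 t) (K2 t) * (l1 * measure lborel (A 0 l1))
      + K2 t * ((l2 - l1) * measure lborel (A l1 (l2 - l1))) + min (K1 t) (K2 t) * (l1 * measure lborel (A l2 l1))"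
    by simp
  then show ?thesis
    unfolding A_def using l by (simp add: layer_eq_measure)
qed

lemma integral_layer_integrand_dt:
  assumes "mono_on {0..} s" "s \<in> borel_measurable borel" "v \<in> {0..1}"
  shows "(\<integral>t. layer_integrand s t v \<partial>lborel) = I_tail l1 l2 K1 K2
    (crossing_time s (l1 * v)) (crossing_time s (l1 + (l2 - l1) * v)) (crossing_time s (l2 + l1 * v))"
proof -
  have tail: "(\<integral>t. indicator (superlevel s x) t * f t \<partial>lborel) = tail_integral f (crossing_time s x)"
    if "integrable lborel f" for x and f :: "real \<Rightarrow> real"
    using integral_superlevel_eq_tail_integral[OF assms(1,2) that] .
  have [measurable]: "s \<in> borel_measurable borel" by fact
  have "(\<integral>t. layer_integrand s t v \<partial>lborel) =
      l1 * (\<integral>t. indicator (superlevel s (l1 * v)) t * max (K1 t) (K2 t) \<partial>lborel)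
    + (l2 - l1) * (\<integral>t. indicator (superlevel s (l1 + (l2 - l1) * v)) t * K2 t \<partial>lborel)
    + l1 * (\<integral>t. indicator (superlevel s (l2 + l1 * v)) t * min (K1 t) (K2 t) \<partial>lborel)"
    using assms(3)
    by (simp add: layer_integrand_def mult.assoc integrable_indicator_mult int1 int2)
  then show ?thesis
    by (simp add: I_tail_def tail int2 integrable_max integrable_min int1)
qed

lemma integral_layer_integrand_le_Sup:
  assumes "mono_on {0..} s" "s \<in> borel_measurable borel"
  shows "(\<integral>t. layer_integrand s t v \<partial>lborel) \<le> indicator {0..1} v * Sup (I_abc_values l1 l2 K1 K2)"
proof (cases "v \<in> {0..1}")
  case True
  then have "l1 * v \<le> l1" "(l2 - l1) * v \<le> l2 - l1" "0 \<le> l1 * v" "0 \<le> (l2 - l1) * v"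
    using l by (simp_all add: mult_left_le)
  then have "l1 * v \<le> l1 + (l2 - l1) * v" "l1 + (l2 - l1) * v \<le> l2 + l1 * v"
    by linarith+
  then show ?thesis
    using True by (simp add: integral_layer_integrand_dt[OF assms True]
        I_tail_le_Sup_I_abc_values crossing_time_nonneg crossing_time_mono)
qed (simp add: layer_integrand_def)

lemma admissible_integral_le_Sup_I_abc_values:
  assumes adm: "admissible_pair l1 l2 p1 p2"
  shows "(LINT t:{0..}|lborel. p1 t * K1 t + p2 t * K2 t) \<le> Sup (I_abc_values l1 l2 K1 K2)"
proof -
  define s where "s t = p1 t + p2 t" for t
  have [measurable]: "p1 \<in> borel_measurable borel" "p2 \<in> borel_measurable borel"
    using admissible_pair_measurable[OF adm] .
  have s_meas: "s \<in> borel_measurable borel" unfolding s_def by measurable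
  have s_mono: "mono_on {0..} s" using adm unfolding admissible_pair_def s_def by blast
  note G_int = integrable_layer_integrand[OF s_meas]
  have "indicator {0..} t * (p1 t * K1 t + p2 t * K2 t) \<le> (\<integral>v. layer_integrand s t v \<partial>lborel)" for t
  proof (cases "0 \<le> t")
    case True
    then show ?thesis
      using weighted_sum_le_layers[OF admissible_pair_bounds[OF adm True] \<open>l1 \<le> l2\<close>, of "K1 t" "K2 t"]
      by (simp add: integral_layer_integrand_dv s_def)
  qed (simp add: layer_integrand_def superlevel_def)
  then have "(LINT t:{0..}|lborel. p1 t * K1 t + p2 t * K2 t) \<le> (\<integral>t. \<integral>v. layer_integrand s t v \<partial>lborel \<partial>lborel)"
    unfolding set_lebesgue_integral_def real_scaleR_def
    by (intro Bochner_Integration.integral_mono admissible_integrable[OF adm]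
        lborel_pair.integrable_fst[OF G_int])
  also have "\<dots> = (\<integral>v. \<integral>t. layer_integrand s t v \<partial>lborel \<partial>lborel)"
    using lborel_pair.Fubini_integral[OF G_int] by simp
  also have "\<dots> \<le> (\<integral>v. indicator {0..1::real} v * Sup (I_abc_values l1 l2 K1 K2) \<partial>lborel)"
    using lborel_pair.integrable_snd[OF G_int]
    by (intro Bochner_Integration.integral_mono integral_layer_integrand_le_Sup[OF s_mono s_meas]) simp_all
  also have "\<dots> = Sup (I_abc_values l1 l2 K1 K2)" by simp
  finally show ?thesis .
qed

lemma I_sup_eq_Sup_I_abc_values:
  "I_sup l1 l2 K1 K2 = Sup (I_abc_values l1 l2 K1 K2)"
proof (rule antisym)
  have "admissible_pair l1 l2 (\<lambda>_. 0) (\<lambda>_. 0)"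
    using l by (auto simp: admissible_pair_def intro: mono_onI)
  then show "I_sup l1 l2 K1 K2 \<le> Sup (I_abc_values l1 l2 K1 K2)"
    unfolding I_sup_def by (intro cSup_least) (auto intro: admissible_integral_le_Sup_I_abc_values)
  show "Sup (I_abc_values l1 l2 K1 K2) \<le> I_sup l1 l2 K1 K2"
  proof (rule cSup_least)
    show "I_abc_values l1 l2 K1 K2 \<noteq> {}" unfolding I_abc_values_def by force
    fix x assume "x \<in> I_abc_values l1 l2 K1 K2"
    then obtain a b c where x: "x = I_abc l1 l2 K1 K2 a b c" "0 \<le> a" "a \<le> b" "ereal b \<le> c"
      unfolding I_abc_values_def by blast
    obtain p1 p2 where "admissible_pair l1 l2 p1 p2"
      "(LINT t:{0..}|lborel. p1 t * K1 t + p2 t * K2 t) = x"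
      using I_tail_attained[OF x(2-4)] I_abc_eq_I_tail[OF x(2-4)] x(1) by metis
    then show "x \<le> I_sup l1 l2 K1 K2"
      unfolding I_sup_def by (intro cSup_upper[OF _ bdd_above_admissible_integrals]) blast
  qed
qed

end

lemma I_sup_cong_nonneg:
  assumes "\<And>t. 0 \<le> t \<Longrightarrow> K1 t = K1' t" "\<And>t. 0 \<le> t \<Longrightarrow> K2 t = K2' t"
  shows "I_sup l1 l2 K1 K2 = I_sup l1 l2 K1' K2'"
proof -
  have "(LINT t:{0..}|lborel. p1 t * K1 t + p2 t * K2 t) = (LINT t:{0..}|lborel. p1 t * K1' t + p2 t * K2' t)"
    for p1 p2 :: "real \<Rightarrow> real"
    using assms by (intro set_lebesgue_integral_cong) auto
  then show ?thesis unfolding I_sup_def by simp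
qed

lemma I_abc_values_cong_nonneg:
  assumes "\<And>t. 0 \<le> t \<Longrightarrow> K1 t = K1' t" "\<And>t. 0 \<le> t \<Longrightarrow> K2 t = K2' t"
  shows "I_abc_values l1 l2 K1 K2 = I_abc_values l1 l2 K1' K2'"
proof -
  have "I_abc l1 l2 K1 K2 a b c = I_abc l1 l2 K1' K2' a b c"
    if "0 \<le> a" "a \<le> b" "ereal b \<le> c" for a b c
  proof -
    have "0 \<le> t" if "c \<le> ereal t" for t
      using order_trans[OF \<open>ereal b \<le> c\<close> that] \<open>0 \<le> a\<close> \<open>a \<le> b\<close> by simp
    then have "(LINT t:{t. a \<le> t \<and> ereal t < c}|lborel. max (K1 t) (K2 t))
        = (LINT t:{t. a \<le> t \<and> ereal t < c}|lborel. max (K1' t) (K2' t))"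
      "(LINT t:{t. c \<le> ereal t}|lborel. K1 t + K2 t) = (LINT t:{t. c \<le> ereal t}|lborel. K1' t + K2' t)"
      "(LINT t:{b..}|lborel. K2 t) = (LINT t:{b..}|lborel. K2' t)"
      using assms that by (intro set_lebesgue_integral_cong; simp)+
    then show ?thesis unfolding I_abc_def by simp
  qed
  then show ?thesis unfolding I_abc_values_def by force
qed

theorem proposition3:
  fixes l1 l2 :: real and K1 K2 :: "real \<Rightarrow> real"
  assumes "0 < l1" "l1 \<le> l2" "l2 \<le> 1"
    and "set_integrable lborel {0..} K1" "set_integrable lborel {0..} K2"
  shows "I_sup l1 l2 K1 K2 =
    Sup {I_abc l1 l2 K1 K2 a b c | a b c. 0 \<le> a \<and> a \<le> b \<and> ereal b \<le> c}"
proof -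
  define K1' where "K1' t = indicator {0..} t * K1 t" for t :: real
  define K2' where "K2' t = indicator {0..} t * K2 t" for t :: real
  have "integrable lborel K1'" "integrable lborel K2'"
    using assms(4,5) by (simp_all add: set_integrable_def K1'_def[abs_def] K2'_def[abs_def])
  moreover have "K1 t = K1' t" "K2 t = K2' t" if "0 \<le> t" for t
    using that by (simp_all add: K1'_def K2'_def)
  ultimately show ?thesis
    unfolding I_abc_values_def[symmetric]
    using I_sup_eq_Sup_I_abc_values[OF assms(1-3)] I_sup_cong_nonneg I_abc_values_cong_nonneg
    by metis
qed

end
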